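(* Let $\mathfrak K$ be a diagram category. (1) The universal index and the universal signed index on $\mathfrak K$ are reduced. (2) If $\sigma^u$ is the universal signed index on $\mathfrak K$ with coefficients in $(S^u,\ast)$, then $\bar\sigma^u=p\circ\sigma^u$, where $p\colon S^u\to S^u/\ast$ is the quotient map, is the universal index on $\mathfrak K$. (3) If $\mathfrak K$ is a subcategory of $\mathfrak T_{m,n}(F,B)$ or $\mathfrak{VT}_{m,n}$ (so crossings have signs) and $\iota^u$ is the universal index on $\mathfrak K$ with coefficients in $I^u$, then $\tilde\iota^u(v)=(\iota^u(v),sgn(v))$ is the universal signed index on $\mathfrak K$, with coefficients in $I^u\times\{-1,+1\}$ and involution $(x,\epsilon)^\ast=(x,-\epsilon)$.
   Context: A diagram category $\mathfrak K$ is either the category of diagrams of a fixed oriented tangle with numbered components (virtual, flat, free, in a fixed surface $F$, flat in $F$, or classical), or a union of such categories over all tangles of a given type; $\mathfrak T_{m,n}(F,B)$ denotes tangles of type $(m,n)$ with boundary $B$ in $F$ and $\mathfrak{VT}_{m,n}$ virtual tangles of type $(m,n)$. Morphisms are formal compositions of isotopies, diagram isomorphisms, and Reidemeister moves. $\mathcal V(D)$ is the set of crossings, $sgn$ the crossing sign; for a morphism $f$, $f_*\colon dom(f_* )\to im(f_* )$ is the bijection between crossings surviving $f$ and their images. An index with coefficients in $I$ is a map $\iota\colon\bigsqcup_D\mathcal V(D)\to I$ with (I0) $\iota(f_*(v))=\iota(v)$ for elementary $f$, $v\in dom(f_* )$, and (I2) $\iota(v_1)=\iota(v_2)$ when a decreasing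 second Reidemeister move can be applied to $v_1,v_2$. A signed index with coefficients in $(S,\ast)$ satisfies (I0) and (I2+) $\sigma(v_1)=\sigma(v_2)^\ast$ for such pairs. An index $\iota^u$ is universal if every index $\iota$ factors uniquely as $\psi\circ\iota^u$; a signed index $\sigma^u$ is universal if every signed index $\sigma$ factors uniquely as $\psi\circ\sigma^u$ with $\psi(x^\ast)=\psi(x)^\ast$. A (signed) index $\sigma$ with coefficients in $S$ is reduced if $S=\{\sigma(v)\mid v\in\mathcal V(D),D\in\mathfrak K\}$. *)

theory Defs
  imports "HOL-Library.FuncSet"
begin

text \<open>The crossings of all diagrams of the
category are the elements of a type 'v (the disjoint union of the sets V(D)).
  E v w : there is an elementary morphism f with v in dom(f_*) and f_*(v) = w
          (isotopy, diagram isomorphism or Reidemeister move, in either direction).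
  R v1 v2 : a decreasing second Reidemeister move can be applied to v1, v2.\<close>

text \<open>Geometric properties of diagram categories used by the statement:
 R2 pairs are unordered, and every crossing v can be paired by an R2 move
 after an elementary move (push a small finger of one strand of v across the
 other strand right next to v: this increasing R2 move carries v to v' and
 v' forms an empty bigon with one of the new crossings).\<close>
definition diagram_category :: "('v \<Rightarrow> 'v \<Rightarrow> bool) \<Rightarrow> ('v \<Rightarrow> 'v \<Rightarrow> bool) \<Rightarrow> bool" where
  "diagram_category E R \<longleftrightarrow>
     (\<forall>v1 v2. R v1 v2 \<longrightarrow> R v2 v1) \<and>
     (\<forall>v. \<exists>v' w. E v v' \<and> R v' w)"

definition signed_crossings ::
  "('v \<Rightarrow> 'v \<Rightarrow> bool) \<Rightarrow> ('v \<Rightarrow> 'v \<Rightarrow> bool) \<Rightarrow> ('v \<Rightarrow> int) \<Rightarrow> bool" where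
  "signed_crossings E R sg \<longleftrightarrow>
     (\<forall>v. sg v \<in> {-1, 1}) \<and>
     (\<forall>v w. E v w \<longrightarrow> sg w = sg v) \<and>
     (\<forall>v1 v2. R v1 v2 \<longrightarrow> sg v2 = - sg v1)"

definition is_index ::
  "('v \<Rightarrow> 'v \<Rightarrow> bool) \<Rightarrow> ('v \<Rightarrow> 'v \<Rightarrow> bool) \<Rightarrow> ('v \<Rightarrow> 'i) \<Rightarrow> 'i set \<Rightarrow> bool" where
  "is_index E R \<iota> I \<longleftrightarrow>
     (\<forall>v. \<iota> v \<in> I) \<and>
     (\<forall>v w. E v w \<longrightarrow> \<iota> w = \<iota> v) \<and>
     (\<forall>v1 v2. R v1 v2 \<longrightarrow> \<iota> v1 = \<iota> v2)"

definition signed_coeffs :: "'s set \<Rightarrow> ('s \<Rightarrow> 's) \<Rightarrow> bool" where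
  "signed_coeffs S st \<longleftrightarrow> (\<forall>x\<in>S. st x \<in> S \<and> st (st x) = x)"

definition is_signed_index ::
  "('v \<Rightarrow> 'v \<Rightarrow> bool) \<Rightarrow> ('v \<Rightarrow> 'v \<Rightarrow> bool) \<Rightarrow> ('v \<Rightarrow> 's) \<Rightarrow> 's set \<Rightarrow> ('s \<Rightarrow> 's) \<Rightarrow> bool" where
  "is_signed_index E R \<sigma> S st \<longleftrightarrow>
     signed_coeffs S st \<and>
     (\<forall>v. \<sigma> v \<in> S) \<and>
     (\<forall>v w. E v w \<longrightarrow> \<sigma> w = \<sigma> v) \<and>
     (\<forall>v1 v2. R v1 v2 \<longrightarrow> \<sigma> v1 = st (\<sigma> v2))"

text \<open>Universality, with test coefficient sets ranging over all subsets of the type 'c.\<close>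
definition universal_index ::
  "'c itself \<Rightarrow> ('v \<Rightarrow> 'v \<Rightarrow> bool) \<Rightarrow> ('v \<Rightarrow> 'v \<Rightarrow> bool) \<Rightarrow> ('v \<Rightarrow> 'i) \<Rightarrow> 'i set \<Rightarrow> bool" where
  "universal_index (_::'c itself) E R \<iota>u Iu \<longleftrightarrow>
     is_index E R \<iota>u Iu \<and>
     (\<forall>(I::'c set) \<iota>. is_index E R \<iota> I \<longrightarrow>
        (\<exists>\<psi>. (\<psi> \<in> Iu \<rightarrow> I) \<and> (\<forall>v. \<iota> v = \<psi> (\<iota>u v))) \<and>
        (\<forall>\<psi>1 \<psi>2. (\<psi>1 \<in> Iu \<rightarrow> I) \<and> (\<forall>v. \<iota> v = \<psi>1 (\<iota>u v)) \<and>
                 (\<psi>2 \<in> Iu \<rightarrow> I) \<and> (\<forall>v. \<iota> v = \<psi>2 (\<iota>u v)) \<longrightarrow>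
                 (\<forall>x\<in>Iu. \<psi>1 x = \<psi>2 x)))"

definition universal_signed_index ::
  "'c itself \<Rightarrow> ('v \<Rightarrow> 'v \<Rightarrow> bool) \<Rightarrow> ('v \<Rightarrow> 'v \<Rightarrow> bool) \<Rightarrow> ('v \<Rightarrow> 's) \<Rightarrow> 's set \<Rightarrow> ('s \<Rightarrow> 's) \<Rightarrow> bool" where
  "universal_signed_index (_::'c itself) E R \<sigma>u Su stu \<longleftrightarrow>
     is_signed_index E R \<sigma>u Su stu \<and>
     (\<forall>(S::'c set) st \<sigma>. is_signed_index E R \<sigma> S st \<longrightarrow>
        (\<exists>\<psi>. (\<psi> \<in> Su \<rightarrow> S) \<and> (\<forall>x\<in>Su. \<psi> (stu x) = st (\<psi> x)) \<and> (\<forall>v. \<sigma> v = \<psi> (\<sigma>u v))) \<and>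
        (\<forall>\<psi>1 \<psi>2. (\<psi>1 \<in> Su \<rightarrow> S) \<and> (\<forall>x\<in>Su. \<psi>1 (stu x) = st (\<psi>1 x)) \<and> (\<forall>v. \<sigma> v = \<psi>1 (\<sigma>u v)) \<and>
                 (\<psi>2 \<in> Su \<rightarrow> S) \<and> (\<forall>x\<in>Su. \<psi>2 (stu x) = st (\<psi>2 x)) \<and> (\<forall>v. \<sigma> v = \<psi>2 (\<sigma>u v)) \<longrightarrow>
                 (\<forall>x\<in>Su. \<psi>1 x = \<psi>2 x)))"

definition reduced :: "('v \<Rightarrow> 'i) \<Rightarrow> 'i set \<Rightarrow> bool" where
  "reduced \<iota> I \<longleftrightarrow> I = range \<iota>"

definition star_quot :: "'s set \<Rightarrow> ('s \<Rightarrow> 's) \<Rightarrow> 's set set" where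
  "star_quot S st = (\<lambda>x. {x, st x}) ` S"

definition star_proj :: "('s \<Rightarrow> 's) \<Rightarrow> 's \<Rightarrow> 's set" where
  "star_proj st x = {x, st x}"

end

theory Submission
  imports Defs
begin

text \<open>
  Universality is tested by factorizing well-chosen indices through the universal one.
  Reducedness: the constant index factors both through the constant map and through the
  indicator of the range of the universal index, so uniqueness forces every coefficient
  into the range; in the signed case the indicator is compatible with the involution because
  every crossing has an R2 partner, so the range is closed under the involution.
  Quotient: indices are the signed indices with trivial involution, and involution-invariant
  maps on the coefficients are exactly the maps on the quotient.
  Signs: twisting a signed index by the crossing sign (applying the involution at negative
  crossings) turns it into an index, and a map on the coefficients of the universal index
  extends uniquely to an equivariant map on pairs (coefficient, sign).
\<close>

lemma universal_index_is_index:
  "universal_index TYPE('c) E R \<iota>u Iu \<Longrightarrow> is_index E R \<iota>u Iu"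
  unfolding universal_index_def by blast

lemma universal_index_factor:
  assumes "universal_index TYPE('c) E R \<iota>u Iu" and "is_index E R \<iota> (I :: 'c set)"
  obtains \<psi> where "\<psi> \<in> Iu \<rightarrow> I" and "\<And>v. \<iota> v = \<psi> (\<iota>u v)"
  using assms unfolding universal_index_def by blast

lemma universal_index_unique:
  assumes "universal_index TYPE('c) E R \<iota>u Iu" and "is_index E R \<iota> (I :: 'c set)"
    and "\<psi> \<in> Iu \<rightarrow> I" and "\<And>v. \<iota> v = \<psi> (\<iota>u v)"
    and "\<psi>' \<in> Iu \<rightarrow> I" and "\<And>v. \<iota> v = \<psi>' (\<iota>u v)"
    and "x \<in> Iu"
  shows "\<psi> x = \<psi>' x"
  using assms unfolding universal_index_def by blast

lemma universal_indexI:
  assumes "is_index E R \<iota>u Iu"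
    and "\<And>(I :: 'c set) \<iota>. is_index E R \<iota> I \<Longrightarrow> \<exists>\<psi>. \<psi> \<in> Iu \<rightarrow> I \<and> (\<forall>v. \<iota> v = \<psi> (\<iota>u v))"
    and "\<And>(I :: 'c set) \<iota> \<psi> \<psi>' x. is_index E R \<iota> I \<Longrightarrow>
           \<psi> \<in> Iu \<rightarrow> I \<Longrightarrow> \<forall>v. \<iota> v = \<psi> (\<iota>u v) \<Longrightarrow>
           \<psi>' \<in> Iu \<rightarrow> I \<Longrightarrow> \<forall>v. \<iota> v = \<psi>' (\<iota>u v) \<Longrightarrow> x \<in> Iu \<Longrightarrow> \<psi> x = \<psi>' x"
  shows "universal_index TYPE('c) E R \<iota>u Iu"
  using assms unfolding universal_index_def by blast

lemma universal_signed_index_is_signed_index: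
  "universal_signed_index TYPE('c) E R \<sigma>u Su stu \<Longrightarrow> is_signed_index E R \<sigma>u Su stu"
  unfolding universal_signed_index_def by blast

lemma universal_signed_index_factor:
  assumes "universal_signed_index TYPE('c) E R \<sigma>u Su stu" and "is_signed_index E R \<sigma> (S :: 'c set) st"
  obtains \<psi> where "\<psi> \<in> Su \<rightarrow> S" and "\<And>x. x \<in> Su \<Longrightarrow> \<psi> (stu x) = st (\<psi> x)"
    and "\<And>v. \<sigma> v = \<psi> (\<sigma>u v)"
  using assms unfolding universal_signed_index_def by blast

lemma universal_signed_index_unique:
  assumes "universal_signed_index TYPE('c) E R \<sigma>u Su stu" and "is_signed_index E R \<sigma> (S :: 'c set) st"
    and "\<psi> \<in> Su \<rightarrow> S" and "\<And>x. x \<in> Su \<Longrightarrow> \<psi> (stu x) = st (\<psi> x)" and "\<And>v. \<sigma> v = \<psi> (\<sigma>u v)"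
    and "\<psi>' \<in> Su \<rightarrow> S" and "\<And>x. x \<in> Su \<Longrightarrow> \<psi>' (stu x) = st (\<psi>' x)" and "\<And>v. \<sigma> v = \<psi>' (\<sigma>u v)"
    and "x \<in> Su"
  shows "\<psi> x = \<psi>' x"
  using assms unfolding universal_signed_index_def by blast

lemma universal_signed_indexI:
  assumes "is_signed_index E R \<sigma>u Su stu"
    and "\<And>(S :: 'c set) st \<sigma>. is_signed_index E R \<sigma> S st \<Longrightarrow>
           \<exists>\<psi>. \<psi> \<in> Su \<rightarrow> S \<and> (\<forall>x\<in>Su. \<psi> (stu x) = st (\<psi> x)) \<and> (\<forall>v. \<sigma> v = \<psi> (\<sigma>u v))"
    and "\<And>(S :: 'c set) st \<sigma> \<psi> \<psi>' x. is_signed_index E R \<sigma> S st \<Longrightarrow>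
           \<psi> \<in> Su \<rightarrow> S \<Longrightarrow> \<forall>x\<in>Su. \<psi> (stu x) = st (\<psi> x) \<Longrightarrow> \<forall>v. \<sigma> v = \<psi> (\<sigma>u v) \<Longrightarrow>
           \<psi>' \<in> Su \<rightarrow> S \<Longrightarrow> \<forall>x\<in>Su. \<psi>' (stu x) = st (\<psi>' x) \<Longrightarrow> \<forall>v. \<sigma> v = \<psi>' (\<sigma>u v) \<Longrightarrow>
           x \<in> Su \<Longrightarrow> \<psi> x = \<psi>' x"
  shows "universal_signed_index TYPE('c) E R \<sigma>u Su stu"
  using assms unfolding universal_signed_index_def by blast

lemma is_index_iff_is_signed_index_id:
  "is_index E R \<iota> I \<longleftrightarrow> is_signed_index E R \<iota> I id"
  unfolding is_index_def is_signed_index_def signed_coeffs_def by auto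

lemma signed_coeffsD:
  "signed_coeffs S st \<Longrightarrow> x \<in> S \<Longrightarrow> st x \<in> S"
  "signed_coeffs S st \<Longrightarrow> x \<in> S \<Longrightarrow> st (st x) = x"
  unfolding signed_coeffs_def by blast+

lemma is_signed_indexD:
  assumes "is_signed_index E R \<sigma> S st"
  shows "signed_coeffs S st" and "\<sigma> v \<in> S" and "E v w \<Longrightarrow> \<sigma> w = \<sigma> v"
    and "R v1 v2 \<Longrightarrow> \<sigma> v1 = st (\<sigma> v2)"
  using assms unfolding is_signed_index_def by blast+

lemma universal_index_reduced:
  assumes univ: "universal_index TYPE('c) E R \<iota>u Iu" and "a \<noteq> (b :: 'c)"
  shows "reduced \<iota>u Iu"
proof -
  have const: "is_index E R (\<lambda>_. a) UNIV"
    unfolding is_index_def by simp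
  have "a = (if x \<in> range \<iota>u then a else b)" if "x \<in> Iu" for x
    by (rule universal_index_unique[OF univ const _ _ _ _ that]) auto
  with \<open>a \<noteq> b\<close> have "Iu \<subseteq> range \<iota>u"
    by (metis subsetI)
  moreover have "range \<iota>u \<subseteq> Iu"
    using universal_index_is_index[OF univ] unfolding is_index_def by auto
  ultimately show ?thesis
    unfolding reduced_def by blast
qed

lemma signed_index_range_closed:
  assumes "diagram_category E R" and "is_signed_index E R \<sigma> S st"
  shows "st (\<sigma> v) \<in> range \<sigma>"
proof -
  obtain v' w where "E v v'" and "R v' w"
    using assms(1) unfolding diagram_category_def by blast
  then have "R w v'"
    using assms(1) unfolding diagram_category_def by blast
  then have "\<sigma> w = st (\<sigma> v)"
    using is_signed_indexD(3,4)[OF assms(2)] \<open>E v v'\<close> by metis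
  then show ?thesis
    by (metis rangeI)
qed

lemma universal_signed_index_reduced:
  assumes dc: "diagram_category E R" and univ: "universal_signed_index TYPE('c) E R \<sigma>u Su stu"
    and "a \<noteq> (b :: 'c)"
  shows "reduced \<sigma>u Su"
proof -
  have sidx: "is_signed_index E R \<sigma>u Su stu"
    by (rule universal_signed_index_is_signed_index[OF univ])
  have const: "is_signed_index E R (\<lambda>_. a) UNIV id"
    unfolding is_signed_index_def signed_coeffs_def by simp
  have range_star: "stu x \<in> range \<sigma>u \<longleftrightarrow> x \<in> range \<sigma>u" if "x \<in> Su" for x
    using signed_index_range_closed[OF dc sidx] signed_coeffsD(2)[OF is_signed_indexD(1)[OF sidx] that]
    by (metis rangeE)
  have "a = (if x \<in> range \<sigma>u then a else b)" if "x \<in> Su" for x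
    by (rule universal_signed_index_unique[OF univ const _ _ _ _ _ _ that]) (auto simp: range_star)
  with \<open>a \<noteq> b\<close> have "Su \<subseteq> range \<sigma>u"
    by (metis subsetI)
  moreover have "range \<sigma>u \<subseteq> Su"
    using is_signed_indexD(2)[OF sidx] by auto
  ultimately show ?thesis
    unfolding reduced_def by blast
qed

lemma star_quot_eq_image: "star_quot S st = star_proj st ` S"
  unfolding star_quot_def star_proj_def ..

lemma star_proj_star:
  "signed_coeffs S st \<Longrightarrow> x \<in> S \<Longrightarrow> star_proj st (st x) = star_proj st x"
  unfolding star_proj_def by (auto dest: signed_coeffsD(2))

lemma is_index_star_proj:
  assumes "is_signed_index E R \<sigma> S st"
  shows "is_index E R (star_proj st \<circ> \<sigma>) (star_quot S st)"
  unfolding is_index_def star_quot_eq_image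
  using is_signed_indexD[OF assms] star_proj_star by (metis comp_apply rangeI image_eqI)

lemma star_invariant_descends:
  assumes coeffs: "signed_coeffs S st" and "\<psi> \<in> S \<rightarrow> I"
    and inv: "\<And>x. x \<in> S \<Longrightarrow> \<psi> (st x) = \<psi> x"
  obtains \<phi> where "\<phi> \<in> star_quot S st \<rightarrow> I" and "\<And>x. x \<in> S \<Longrightarrow> \<phi> (star_proj st x) = \<psi> x"
proof
  define \<phi> where "\<phi> q = \<psi> (SOME x. x \<in> S \<and> q = star_proj st x)" for q
  show \<phi>_proj: "\<phi> (star_proj st x) = \<psi> x" if "x \<in> S" for x
  proof -
    define y where "y = (SOME y. y \<in> S \<and> star_proj st x = star_proj st y)"
    have "y \<in> S" and "star_proj st x = star_proj st y"
      using someI[of "\<lambda>y. y \<in> S \<and> star_proj st x = star_proj st y" x] that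
      unfolding y_def by blast+
    then have "y = x \<or> y = st x"
      unfolding star_proj_def by (auto simp: doubleton_eq_iff)
    then have "\<psi> y = \<psi> x"
      using inv \<open>x \<in> S\<close> by metis
    then show ?thesis
      unfolding \<phi>_def y_def .
  qed
  show "\<phi> \<in> star_quot S st \<rightarrow> I"
    unfolding star_quot_eq_image using \<phi>_proj \<open>\<psi> \<in> S \<rightarrow> I\<close> by auto
qed

lemma universal_index_star_quot:
  assumes univ: "universal_signed_index TYPE('c) E R \<sigma>u Su stu"
  shows "universal_index TYPE('c) E R (star_proj stu \<circ> \<sigma>u) (star_quot Su stu)"
proof -
  have sidx: "is_signed_index E R \<sigma>u Su stu"
    by (rule universal_signed_index_is_signed_index[OF univ])
  note coeffs = is_signed_indexD(1)[OF sidx]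
  show ?thesis
  proof (rule universal_indexI)
    show "is_index E R (star_proj stu \<circ> \<sigma>u) (star_quot Su stu)"
      by (rule is_index_star_proj[OF sidx])
  next
    fix I :: "'c set" and \<iota>
    assume "is_index E R \<iota> I"
    then obtain \<psi> where "\<psi> \<in> Su \<rightarrow> I" and "\<And>x. x \<in> Su \<Longrightarrow> \<psi> (stu x) = \<psi> x"
      and \<iota>_eq: "\<And>v. \<iota> v = \<psi> (\<sigma>u v)"
      using universal_signed_index_factor[OF univ] by (metis is_index_iff_is_signed_index_id id_apply)
    then obtain \<phi> where "\<phi> \<in> star_quot Su stu \<rightarrow> I"
      and "\<And>x. x \<in> Su \<Longrightarrow> \<phi> (star_proj stu x) = \<psi> x"
      using star_invariant_descends[OF coeffs] by blast
    then show "\<exists>\<phi>. \<phi> \<in> star_quot Su stu \<rightarrow> I \<and> (\<forall>v. \<iota> v = \<phi> ((star_proj stu \<circ> \<sigma>u) v))"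
      using \<iota>_eq is_signed_indexD(2)[OF sidx] by auto
  next
    fix I :: "'c set" and \<iota> \<phi>1 \<phi>2 q
    assume "is_index E R \<iota> I"
      and \<phi>1: "\<phi>1 \<in> star_quot Su stu \<rightarrow> I" "\<forall>v. \<iota> v = \<phi>1 ((star_proj stu \<circ> \<sigma>u) v)"
      and \<phi>2: "\<phi>2 \<in> star_quot Su stu \<rightarrow> I" "\<forall>v. \<iota> v = \<phi>2 ((star_proj stu \<circ> \<sigma>u) v)"
      and "q \<in> star_quot Su stu"
    then obtain x where "x \<in> Su" and q: "q = star_proj stu x"
      unfolding star_quot_eq_image by blast
    have "is_signed_index E R \<iota> I id"
      using \<open>is_index E R \<iota> I\<close> by (simp add: is_index_iff_is_signed_index_id)
    then have "(\<phi>1 \<circ> star_proj stu) x = (\<phi>2 \<circ> star_proj stu) x"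
    proof (rule universal_signed_index_unique[OF univ _ _ _ _ _ _ _ \<open>x \<in> Su\<close>])
      show "\<phi>1 \<circ> star_proj stu \<in> Su \<rightarrow> I" "\<phi>2 \<circ> star_proj stu \<in> Su \<rightarrow> I"
        using \<phi>1(1) \<phi>2(1) unfolding star_quot_eq_image by auto
      show "(\<phi>1 \<circ> star_proj stu) (stu y) = id ((\<phi>1 \<circ> star_proj stu) y)"
        "(\<phi>2 \<circ> star_proj stu) (stu y) = id ((\<phi>2 \<circ> star_proj stu) y)" if "y \<in> Su" for y
        using star_proj_star[OF coeffs that] by simp_all
      show "\<iota> v = (\<phi>1 \<circ> star_proj stu) (\<sigma>u v)" "\<iota> v = (\<phi>2 \<circ> star_proj stu) (\<sigma>u v)" for v
        using \<phi>1(2) \<phi>2(2) by simp_all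
    qed
    then show "\<phi>1 q = \<phi>2 q"
      unfolding q by simp
  qed
qed

definition sign_twist :: "('v \<Rightarrow> int) \<Rightarrow> ('s \<Rightarrow> 's) \<Rightarrow> ('v \<Rightarrow> 's) \<Rightarrow> 'v \<Rightarrow> 's" where
  "sign_twist sg st \<sigma> v = (if sg v = 1 then \<sigma> v else st (\<sigma> v))"

definition sign_extend :: "('s \<Rightarrow> 's) \<Rightarrow> ('i \<Rightarrow> 's) \<Rightarrow> 'i \<times> int \<Rightarrow> 's" where
  "sign_extend st \<phi> = (\<lambda>(a, e). if e = 1 then \<phi> a else st (\<phi> a))"

lemma is_index_sign_twist:
  assumes sgn: "signed_crossings E R sg" and sidx: "is_signed_index E R \<sigma> S st"
  shows "is_index E R (sign_twist sg st \<sigma>) S"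
proof -
  note coeffs = is_signed_indexD(1)[OF sidx]
  have "sign_twist sg st \<sigma> v1 = sign_twist sg st \<sigma> v2" if "R v1 v2" for v1 v2
  proof -
    have "sg v2 = - sg v1" and "sg v1 = -1 \<or> sg v1 = 1"
      using sgn that unfolding signed_crossings_def by auto
    then show ?thesis
      using is_signed_indexD(2)[OF sidx] is_signed_indexD(4)[OF sidx that] signed_coeffsD(2)[OF coeffs]
      unfolding sign_twist_def by auto
  qed
  then show ?thesis
    using sgn is_signed_indexD(2,3)[OF sidx] signed_coeffsD(1)[OF coeffs]
    unfolding is_index_def sign_twist_def signed_crossings_def by auto
qed

lemma sign_extend_Pi:
  "signed_coeffs S st \<Longrightarrow> \<phi> \<in> I \<rightarrow> S \<Longrightarrow> sign_extend st \<phi> \<in> I \<times> {-1, 1} \<rightarrow> S"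
  unfolding sign_extend_def by (auto dest: signed_coeffsD(1))

lemma sign_extend_equivariant:
  assumes "signed_coeffs S st" and "\<phi> \<in> I \<rightarrow> S" and "x \<in> I \<times> {-1, 1}"
  shows "sign_extend st \<phi> ((\<lambda>(a, e). (a, - e)) x) = st (sign_extend st \<phi> x)"
  using assms unfolding sign_extend_def by (auto dest: signed_coeffsD(2))

lemma sign_extend_sign_twist:
  assumes "signed_coeffs S st" and "\<sigma> v \<in> S" and "\<phi> a = sign_twist sg st \<sigma> v"
  shows "sign_extend st \<phi> (a, sg v) = \<sigma> v"
  using assms unfolding sign_extend_def sign_twist_def by (auto dest: signed_coeffsD(2))

lemma equivariant_eq_sign_extend:
  assumes "\<And>x. x \<in> I \<times> {-1, 1} \<Longrightarrow> \<psi> ((\<lambda>(a, e). (a, - e)) x) = st (\<psi> x)"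
    and "x \<in> I \<times> {-1, 1}"
  shows "\<psi> x = sign_extend st (\<lambda>a. \<psi> (a, 1)) x"
  using assms(2) assms(1)[of "(fst x, 1)"] unfolding sign_extend_def by auto

lemma sign_twist_factor:
  assumes sgn: "signed_crossings E R sg" and coeffs: "signed_coeffs S st"
    and "\<psi> \<in> I \<times> {-1, 1} \<rightarrow> S"
    and "\<And>x. x \<in> I \<times> {-1, 1} \<Longrightarrow> \<psi> ((\<lambda>(a, e). (a, - e)) x) = st (\<psi> x)"
    and "\<sigma> v = \<psi> (a, sg v)" and "a \<in> I"
  shows "sign_twist sg st \<sigma> v = \<psi> (a, 1)"
proof (cases "sg v = 1")
  case False
  then have "sg v = -1"
    using sgn unfolding signed_crossings_def by auto
  then have "\<sigma> v = st (\<psi> (a, 1))"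
    using assms(4)[of "(a, 1)"] assms(5,6) by simp
  moreover have "\<psi> (a, 1) \<in> S"
    using assms(3,6) by auto
  ultimately show ?thesis
    using False signed_coeffsD(2)[OF coeffs] unfolding sign_twist_def by simp
qed (use assms(5) in \<open>simp add: sign_twist_def\<close>)

lemma universal_signed_index_sign:
  assumes sgn: "signed_crossings E R sg" and univ: "universal_index TYPE('c) E R \<iota>u Iu"
  shows "universal_signed_index TYPE('c) E R (\<lambda>v. (\<iota>u v, sg v)) (Iu \<times> {-1, 1}) (\<lambda>(a, e). (a, - e))"
proof -
  have idx: "is_index E R \<iota>u Iu"
    by (rule universal_index_is_index[OF univ])
  then have \<iota>u_in: "\<iota>u v \<in> Iu" for v
    unfolding is_index_def by blast
  show ?thesis
  proof (rule universal_signed_indexI)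
    show "is_signed_index E R (\<lambda>v. (\<iota>u v, sg v)) (Iu \<times> {-1, 1}) (\<lambda>(a, e). (a, - e))"
      using idx sgn unfolding is_index_def signed_crossings_def is_signed_index_def signed_coeffs_def
      by auto
  next
    fix S :: "'c set" and st \<sigma>
    assume sidx: "is_signed_index E R \<sigma> S st"
    note coeffs = is_signed_indexD(1)[OF sidx]
    obtain \<phi> where \<phi>: "\<phi> \<in> Iu \<rightarrow> S" and "\<And>v. sign_twist sg st \<sigma> v = \<phi> (\<iota>u v)"
      using universal_index_factor[OF univ is_index_sign_twist[OF sgn sidx]] by blast
    then have "\<sigma> v = sign_extend st \<phi> (\<iota>u v, sg v)" for v
      using sign_extend_sign_twist[of S st \<sigma> v \<phi> "\<iota>u v" sg, OF coeffs is_signed_indexD(2)[OF sidx]]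
      by simp
    then show "\<exists>\<psi>. \<psi> \<in> Iu \<times> {-1, 1} \<rightarrow> S \<and> (\<forall>x\<in>Iu \<times> {-1, 1}. \<psi> ((\<lambda>(a, e). (a, - e)) x) = st (\<psi> x))
        \<and> (\<forall>v. \<sigma> v = \<psi> (\<iota>u v, sg v))"
      using sign_extend_Pi[OF coeffs \<phi>] sign_extend_equivariant[OF coeffs \<phi>] by blast
  next
    fix S :: "'c set" and st \<sigma> \<psi>1 \<psi>2 and x :: "_ \<times> int"
    assume sidx: "is_signed_index E R \<sigma> S st"
      and \<psi>1: "\<psi>1 \<in> Iu \<times> {-1, 1} \<rightarrow> S" "\<forall>x\<in>Iu \<times> {-1, 1}. \<psi>1 ((\<lambda>(a, e). (a, - e)) x) = st (\<psi>1 x)"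
        "\<forall>v. \<sigma> v = \<psi>1 (\<iota>u v, sg v)"
      and \<psi>2: "\<psi>2 \<in> Iu \<times> {-1, 1} \<rightarrow> S" "\<forall>x\<in>Iu \<times> {-1, 1}. \<psi>2 ((\<lambda>(a, e). (a, - e)) x) = st (\<psi>2 x)"
        "\<forall>v. \<sigma> v = \<psi>2 (\<iota>u v, sg v)"
      and x: "x \<in> Iu \<times> {-1, 1}"
    note coeffs = is_signed_indexD(1)[OF sidx]
    have restrictions_eq: "\<psi>1 (a, 1) = \<psi>2 (a, 1)" if "a \<in> Iu" for a
    proof (rule universal_index_unique[OF univ is_index_sign_twist[OF sgn sidx] _ _ _ _ that,
          where \<psi> = "\<lambda>a. \<psi>1 (a, 1)" and \<psi>' = "\<lambda>a. \<psi>2 (a, 1)"])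
      show "(\<lambda>a. \<psi>1 (a, 1)) \<in> Iu \<rightarrow> S" "(\<lambda>a. \<psi>2 (a, 1)) \<in> Iu \<rightarrow> S"
        using \<psi>1(1) \<psi>2(1) by auto
      show "sign_twist sg st \<sigma> v = \<psi>1 (\<iota>u v, 1)" for v
        by (rule sign_twist_factor[OF sgn coeffs \<psi>1(1) bspec[OF \<psi>1(2)] spec[OF \<psi>1(3)] \<iota>u_in])
      show "sign_twist sg st \<sigma> v = \<psi>2 (\<iota>u v, 1)" for v
        by (rule sign_twist_factor[OF sgn coeffs \<psi>2(1) bspec[OF \<psi>2(2)] spec[OF \<psi>2(3)] \<iota>u_in])
    qed
    have "\<psi>1 x = sign_extend st (\<lambda>a. \<psi>1 (a, 1)) x"
      using equivariant_eq_sign_extend[where \<psi> = \<psi>1, OF bspec[OF \<psi>1(2)] x] .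
    also have "\<dots> = sign_extend st (\<lambda>a. \<psi>2 (a, 1)) x"
      using x restrictions_eq unfolding sign_extend_def by auto
    also have "\<dots> = \<psi>2 x"
      using equivariant_eq_sign_extend[where \<psi> = \<psi>2, OF bspec[OF \<psi>2(2)] x] by simp
    finally show "\<psi>1 x = \<psi>2 x" .
  qed
qed

theorem proposition4:
  fixes E R :: "'v \<Rightarrow> 'v \<Rightarrow> bool" and sg :: "'v \<Rightarrow> int"
  assumes "diagram_category E R"
  shows
   "(\<forall>(\<iota>u :: 'v \<Rightarrow> 'i) Iu. universal_index TYPE(bool) E R \<iota>u Iu \<longrightarrow> reduced \<iota>u Iu) \<and>
    (\<forall>(\<sigma>u :: 'v \<Rightarrow> 's) Su stu. universal_signed_index TYPE(bool) E R \<sigma>u Su stu \<longrightarrow> reduced \<sigma>u Su) \<and>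
    (\<forall>(\<sigma>u :: 'v \<Rightarrow> 's) Su stu. universal_signed_index TYPE('c) E R \<sigma>u Su stu \<longrightarrow>
        universal_index TYPE('c) E R (star_proj stu \<circ> \<sigma>u) (star_quot Su stu)) \<and>
    (signed_crossings E R sg \<longrightarrow>
      (\<forall>(\<iota>u :: 'v \<Rightarrow> 'i) Iu. universal_index TYPE('c) E R \<iota>u Iu \<longrightarrow>
        universal_signed_index TYPE('c) E R (\<lambda>v. (\<iota>u v, sg v)) (Iu \<times> {-1, 1})
          (\<lambda>(x, e). (x, - e))))"
  using universal_index_reduced[where a = True and b = False]
    universal_signed_index_reduced[OF assms, where a = True and b = False]
    universal_index_star_quot universal_signed_index_sign
  by blast

end
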